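(* Assume the setting, the majorant assumptions and the constants described in the context. Let $x_0\in C\cap B(x_*,\sigma)\setminus\{x_*\}$ and $\{\theta_k\}\subset[0,\lambda^2/2]$. Let $\{M_k\}$, $\{(s_k,r_k,y_k)\}$ and $\{x_k\}$ be generated by the INL-CondG method started at $x_0$ with parameters $\{\theta_k\}$ (assume the method does not stop, i.e. $F(x_k)\neq 0$ for all $k$). Assume that for all $k\ge 0$ $$\|M_k^{-1}F'(x_k)\|\le \omega_1,\qquad \|M_k^{-1}F'(x_k)-I\|\le\omega_2,$$ and that there are invertible matrices $P_k$ and scalars $\eta_k$ with $$\|P_kr_k\|\le \eta_k\|P_kF(x_k)\|,\qquad 0\le \eta_k\,\mathrm{cond}(P_kF'(x_k))\le\vartheta .$$ Then $\{x_k\}\subset B(x_*,\sigma)\cap C$, $x_k\to x_*$, and $$\|x_{k+1}-x_*\|<\|x_k-x_*\|\ \ (k\ge0),\qquad \limsup_{k\to\infty}\frac{\|x_{k+1}-x_*\|}{\|x_k-x_*\|}\le \omega_1\big[(1+\vartheta)\sqrt{2\tilde\theta}+\vartheta\big]+\omega_2,$$ where $\tilde\theta=\limsup_{k\to\infty}\theta_k$. Moreover, if additionally for some $0<p\le1$ the following condition holds: (h3) the function $(0,\nu)\ni t\mapsto [f(t)/f'(t)-t]/t^{p+1}$ is strictly increasing, then for every integer $k\ge0$ $$\|x_{k+1}-x_*\|\le \omega_1(1+\vartheta)(1+\lambda)\Big(\frac{f(\|x_0-x_*\|)}{f'(\|x_0-x_*\|)}-\|x_0-x_*\|\Big)\B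ig(\frac{\|x_k-x_*\|}{\|x_0-x_*\|}\Big)^{p+1}+\big(\omega_1[(1+\vartheta)\lambda+\vartheta]+\omega_2\big)\|x_k-x_*\|.$$
   Context: Setting: $\Omega\subset\mathbb{R}^n$ is open, $F:\Omega\to\mathbb{R}^n$ is continuously differentiable with Jacobian $F'(x)$, $C\subset\Omega$ is a nonempty convex compact set, and $x_*\in C$ satisfies $F(x_* )=0$ with $F'(x_* )$ nonsingular. $\|\cdot\|$ is the Euclidean norm on $\mathbb{R}^n$ and the induced operator norm on matrices; $B(a,\delta)$ is the open ball of center $a$ and radius $\delta$; $\mathrm{cond}(A)=\|A^{-1}\|\|A\|$. Majorant assumptions: $R>0$, $\kappa:=\sup\{t\in[0,R): B(x_*,t)\subset\Omega\}$, and $f:[0,R)\to\mathbb{R}$ is continuously differentiable with $$\|F'(x_* )^{-1}[F'(x)-F'(x_*+\tau(x-x_* ))]\|\le f'(\|x-x_*\|)-f'(\tau\|x-x_*\|)\quad\text{for all }\tau\in[0,1],\ x\in B(x_*,\kappa),$$ (h1) $f(0)=0$, $f'(0)=-1$; (h2) $f'$ is strictly increasing. Constants: $0\le\vartheta<1$, $0\le\omega_2<\omega_1$, $\omega_1\vartheta+\omega_2<1$, $\lambda\in[0,(1-\omega_2-\omega_1\vartheta)/(\omega_1(1+\vartheta)))$; $\nu:=\sup\{t\in[0,R): f'(t)<0\}$; $\rho:=\sup\{\delta\in(0,\nu): \omega_1(1+\vartheta)(1+\lambda)\big(\tfrac{f(t)}{tf'(t)}-1\big)+\omega_1[(1+\vartheta)\lambda+\vartheta]+\omega_2<1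 \text{ for all } t\in(0,\delta)\}$; $\sigma:=\min\{\kappa,\rho\}$. CondG procedure $z=\mathrm{CondG}(y,x,\varepsilon)$ (for $y\in\mathbb{R}^n$, $x\in C$, $\varepsilon\ge0$): set $z_1=x$, $t=1$. (P1) Compute an optimal solution $u_t$ of $g_t^*=\min_{u\in C}\langle z_t-y,u-z_t\rangle$. (P2) If $g_t^*\ge-\varepsilon$, set $z=z_t$ and stop; otherwise set $\alpha_t=\min\{1,-g_t^*/\|u_t-z_t\|^2\}$, $z_{t+1}=z_t+\alpha_t(u_t-z_t)$, $t\leftarrow t+1$ and go to (P1). INL-CondG method: given $x_0\in C$ and $\{\theta_j\}\subset[0,\infty)$, for $k=0,1,\dots$: if $F(x_k)=0$ stop; otherwise choose an invertible matrix $M_k$ (approximating $F'(x_k)$) and compute $(s_k,r_k,y_k)$ with $M_ks_k=-F(x_k)+r_k$, $y_k=x_k+s_k$; then set $x_{k+1}=\mathrm{CondG}(y_k,x_k,\theta_k\|s_k\|^2)$. *)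

theory Defs
  imports "HOL-Analysis.Analysis"
begin

definition opnorm :: "real^'n^'n \<Rightarrow> real" where
  "opnorm A = onorm (\<lambda>v. A *v v)"

definition cond :: "real^'n^'n \<Rightarrow> real" where
  "cond A = opnorm (matrix_inv A) * opnorm A"

definition kappa :: "real \<Rightarrow> (real^'n) set \<Rightarrow> real^'n \<Rightarrow> real" where
  "kappa R \<Omega> xs = Sup {t. 0 \<le> t \<and> t < R \<and> ball xs t \<subseteq> \<Omega>}"

definition nu :: "real \<Rightarrow> (real \<Rightarrow> real) \<Rightarrow> real" where
  "nu R df = Sup {t. 0 \<le> t \<and> t < R \<and> df t < 0}"

definition rho :: "real \<Rightarrow> (real \<Rightarrow> real) \<Rightarrow> (real \<Rightarrow> real) \<Rightarrow> real \<Rightarrow> real \<Rightarrow> real \<Rightarrow> real \<Rightarrow> real" where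
  "rho R f df \<omega>1 \<omega>2 vth lam = Sup {\<delta>. 0 < \<delta> \<and> \<delta> < nu R df \<and>
     (\<forall>t. 0 < t \<and> t < \<delta> \<longrightarrow>
        \<omega>1 * (1 + vth) * (1 + lam) * (f t / (t * df t) - 1)
        + \<omega>1 * ((1 + vth) * lam + vth) + \<omega>2 < 1)}"

text \<open>Runs of the CondG procedure: condG C y \<epsilon> z z' means that the procedure,
  started (or currently) at iterate z with target y and tolerance \<epsilon>, stops with
  output z' (for some choice of the optimal solutions u_t in step (P1)).\<close>
inductive condG :: "(real^'n) set \<Rightarrow> real^'n \<Rightarrow> real \<Rightarrow> real^'n \<Rightarrow> real^'n \<Rightarrow> bool"
  for C y \<epsilon> where
  stop: "\<lbrakk> u \<in> C; \<forall>v\<in>C. inner (z - y) (u - z) \<le> inner (z - y) (v - z);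
          inner (z - y) (u - z) \<ge> - \<epsilon> \<rbrakk> \<Longrightarrow> condG C y \<epsilon> z z"
| step: "\<lbrakk> u \<in> C; \<forall>v\<in>C. inner (z - y) (u - z) \<le> inner (z - y) (v - z);
          inner (z - y) (u - z) < - \<epsilon>;
          condG C y \<epsilon> (z + min 1 (- inner (z - y) (u - z) / (norm (u - z))\<^sup>2) *\<^sub>R (u - z)) z' \<rbrakk>
        \<Longrightarrow> condG C y \<epsilon> z z'"

end

theory Submission
  imports Defs
begin

text \<open>Write t = \<parallel>x - x*\<parallel> and e(t) = f(t)/f'(t) - t. The majorant condition gives, through the
  Banach perturbation lemma and the mean value inequality on the segment [x*, x], the Newton
  error bound \<parallel>F'(x)^-1 F(x) - (x - x*)\<parallel> \<le> e(t). The hypotheses on M_k and on the forcing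
  terms transfer it to the inexact Newton point y_k, and the output of CondG is an
  approximate projection of y_k onto C, which adds at most sqrt(2 \<theta>_k) \<parallel>s_k\<parallel>. Altogether
  t_{k+1} \<le> \<omega>1 (1 + \<vartheta>)(1 + \<lambda>) e(t_k) + (\<omega>1 ((1 + \<vartheta>) \<lambda> + \<vartheta>) + \<omega>2) t_k,
  and the definition of \<rho> says exactly that the right-hand side is < t_k for 0 < t_k < \<rho>.
  So the errors decrease, and their limit is a fixed point of a continuous map that has none
  in (0, t_0], hence 0. The limsup bound follows from e(t)/t \<rightarrow> 0, and under (h3) the
  value of e(t)/t^(p+1) at t_k is dominated by its value at t_0.\<close>

lemma norm_matrix_vector_le_opnorm: "norm (A *v v) \<le> opnorm A * norm v"
  unfolding opnorm_def by (rule onorm) simp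

lemma opnorm_nonneg: "0 \<le> opnorm A"
  unfolding opnorm_def by (rule onorm_pos_le) simp

lemma matrix_mul_matrix_inv:
  assumes "invertible (A::real^'n^'n)"
  shows "A ** matrix_inv A = mat 1" "matrix_inv A ** A = mat 1"
proof -
  have "\<exists>A'. A ** A' = mat 1 \<and> A' ** A = mat 1" using assms invertible_def by blast
  hence "A ** matrix_inv A = mat 1 \<and> matrix_inv A ** A = mat 1"
    unfolding matrix_inv_def by (rule someI_ex)
  thus "A ** matrix_inv A = mat 1" "matrix_inv A ** A = mat 1" by auto
qed

lemma matrix_vector_mul_matrix_inv:
  assumes "invertible (A::real^'n^'n)"
  shows "A *v (matrix_inv A *v v) = v" "matrix_inv A *v (A *v v) = v"
  using matrix_mul_matrix_inv[OF assms] by (simp_all add: matrix_vector_mul_assoc)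

lemma invertible_if_norm_bounded_below:
  assumes "0 < c" "\<And>w. c * norm w \<le> norm ((A::real^'n^'n) *v w)"
  shows "invertible A"
proof -
  have "A *v w = 0 \<Longrightarrow> w = 0" for w
    using assms(2)[of w] assms(1) by (simp add: mult_le_0_iff)
  thus ?thesis using matrix_left_invertible_ker invertible_left_inverse by blast
qed

lemma condG_approx_projection:
  assumes "condG C y \<epsilon> z z'" "convex C" "z \<in> C" "0 \<le> \<epsilon>"
  shows "z' \<in> C \<and> (\<forall>v\<in>C. - \<epsilon> \<le> inner (z' - y) (v - z'))"
  using assms
proof (induction rule: condG.induct)
  case (stop u z)
  then show ?case by force
next
  case (step u z z')
  define a where "a = min 1 (- inner (z - y) (u - z) / (norm (u - z))\<^sup>2)"
  have "0 \<le> a" "a \<le> 1"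
    using step.hyps(3) step.prems(3) unfolding a_def by (auto simp: divide_nonpos_nonneg)
  hence "(1 - a) *\<^sub>R z + a *\<^sub>R u \<in> C"
    using step.prems(1,2) step.hyps(1) by (simp add: convexD)
  moreover have "(1 - a) *\<^sub>R z + a *\<^sub>R u = z + a *\<^sub>R (u - z)"
    by (simp add: algebra_simps)
  ultimately show ?case using step.IH step.prems unfolding a_def by simp
qed

lemma approx_projection_dist_le:
  fixes y z w :: "'a::real_inner"
  assumes "- \<epsilon> \<le> inner (z - y) (w - z)" "0 \<le> \<epsilon>"
  shows "norm (z - w) \<le> norm (y - w) + sqrt (2 * \<epsilon>)"
proof -
  have "(norm (y - w))\<^sup>2 = (norm (y - z))\<^sup>2 + (norm (z - w))\<^sup>2 + 2 * inner (z - y) (w - z)"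
    using dot_norm[of "y - z" "z - w"]
    by (simp add: inner_diff_left inner_diff_right inner_commute)
  hence "(norm (z - w))\<^sup>2 \<le> (norm (y - w))\<^sup>2 + 2 * \<epsilon>"
    using assms(1) by (smt (verit) zero_le_power2)
  also have "\<dots> \<le> (norm (y - w) + sqrt (2 * \<epsilon>))\<^sup>2"
    using assms(2) by (simp add: power2_sum)
  finally show ?thesis by (rule power2_le_imp_le) (simp add: assms(2))
qed

lemma residual_le_forcing:
  fixes A P :: "real^'n^'n"
  assumes A: "invertible A" and P: "invertible P"
    and res: "norm (P *v r) \<le> \<eta> * norm (P *v b)"
    and forcing: "\<eta> * cond (P ** A) \<le> vth" and "0 \<le> vth"
  shows "norm (matrix_inv A *v r) \<le> vth * norm (matrix_inv A *v b)"
proof (cases "0 \<le> \<eta>")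
  case True
  define B where "B = P ** A"
  have B: "invertible B" unfolding B_def using invertible_mult[OF P A] .
  have B_inv: "B *v (matrix_inv A *v v) = P *v v" for v
    unfolding B_def using matrix_vector_mul_matrix_inv(1)[OF A]
    by (simp add: matrix_vector_mul_assoc[symmetric])
  have "norm (matrix_inv A *v r) = norm (matrix_inv B *v (P *v r))"
    using matrix_vector_mul_matrix_inv(2)[OF B] B_inv by metis
  also have "\<dots> \<le> opnorm (matrix_inv B) * (\<eta> * norm (P *v b))"
    using norm_matrix_vector_le_opnorm res opnorm_nonneg by (metis mult_left_mono order_trans)
  also have "\<dots> \<le> opnorm (matrix_inv B) * (\<eta> * (opnorm B * norm (matrix_inv A *v b)))"
    using norm_matrix_vector_le_opnorm[of B "matrix_inv A *v b"] True opnorm_nonneg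
    by (intro mult_left_mono) (auto simp: B_inv)
  also have "\<dots> = (\<eta> * cond B) * norm (matrix_inv A *v b)"
    unfolding cond_def by simp
  also have "\<dots> \<le> vth * norm (matrix_inv A *v b)"
    using forcing unfolding B_def by (rule mult_right_mono) simp
  finally show ?thesis .
next
  case False
  hence "P *v r = 0" using res by (smt (verit) mult_nonpos_nonneg norm_ge_zero norm_le_zero_iff)
  hence "r = 0" using matrix_vector_mul_matrix_inv(2)[OF P, of r] by simp
  thus ?thesis using \<open>0 \<le> vth\<close> by simp
qed

lemma inexact_newton_step_le:
  fixes A M :: "real^'n^'n"
  assumes A: "invertible A" and M: "invertible M"
    and step: "M *v s = - b + r"
    and bound1: "opnorm (matrix_inv M ** A) \<le> \<omega>1"
    and bound2: "opnorm (matrix_inv M ** A - mat 1) \<le> \<omega>2"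
    and res: "norm (matrix_inv A *v r) \<le> vth * norm (matrix_inv A *v b)"
    and err: "norm (matrix_inv A *v b - d) \<le> N" and "0 \<le> vth"
  shows "norm s \<le> \<omega>1 * (1 + vth) * (N + norm d)"
    "norm (d + s) \<le> \<omega>2 * norm d + \<omega>1 * N + \<omega>1 * vth * (N + norm d)"
proof -
  define G where "G = matrix_inv M ** A"
  define u where "u = matrix_inv A *v b"
  define w where "w = matrix_inv A *v r"
  have \<omega>1: "0 \<le> \<omega>1" using bound1 opnorm_nonneg order_trans by blast
  have G: "norm (G *v v) \<le> \<omega>1 * norm v" for v
    using norm_matrix_vector_le_opnorm[of G v] mult_right_mono[OF bound1 norm_ge_zero[of v]]
    unfolding G_def by linarith
  have u: "norm u \<le> N + norm d"
    using err norm_triangle_ineq[of "u - d" d] unfolding u_def by simp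
  have w: "norm w \<le> vth * (N + norm d)"
    using res u \<open>0 \<le> vth\<close> unfolding u_def w_def by (smt (verit) mult_left_mono)
  have s: "s = G *v (w - u)"
  proof -
    have "s = matrix_inv M *v (M *v s)" using matrix_vector_mul_matrix_inv(2)[OF M] by simp
    also have "\<dots> = matrix_inv M *v (A *v (w - u))"
      unfolding step w_def u_def
      by (simp add: matrix_vector_mul_matrix_inv(1)[OF A] matrix_vector_mult_diff_distrib)
    finally show ?thesis unfolding G_def by (simp add: matrix_vector_mul_assoc)
  qed
  have "norm s \<le> \<omega>1 * (norm w + norm u)"
    unfolding s using G[of "w - u"] norm_triangle_ineq4[of w u] \<omega>1
    by (smt (verit) mult_left_mono)
  also have "\<dots> \<le> \<omega>1 * (1 + vth) * (N + norm d)"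
    using mult_left_mono[OF add_mono[OF w u] \<omega>1] by (simp add: algebra_simps)
  finally show "norm s \<le> \<omega>1 * (1 + vth) * (N + norm d)" .
  have "d + s = - ((G - mat 1) *v d) + G *v (d - u) + G *v w"
    unfolding s by (simp add: matrix_vector_mult_diff_distrib matrix_vector_mult_diff_rdistrib)
  hence "norm (d + s) \<le> norm ((G - mat 1) *v d) + norm (G *v (d - u)) + norm (G *v w)"
    using norm_triangle_ineq[of "- ((G - mat 1) *v d) + G *v (d - u)" "G *v w"]
      norm_triangle_ineq[of "- ((G - mat 1) *v d)" "G *v (d - u)"] by simp
  moreover have "norm ((G - mat 1) *v d) \<le> \<omega>2 * norm d"
    using norm_matrix_vector_le_opnorm[of "G - mat 1" d] bound2 unfolding G_def
    by (smt (verit) mult_right_mono norm_ge_zero)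
  moreover have "norm (G *v (d - u)) \<le> \<omega>1 * N"
    using G[of "d - u"] err \<omega>1 unfolding u_def
    by (smt (verit) mult_left_mono norm_minus_commute)
  moreover have "norm (G *v w) \<le> \<omega>1 * vth * (N + norm d)"
    using G[of w] w \<omega>1 by (smt (verit) mult.assoc mult_left_mono)
  ultimately show "norm (d + s) \<le> \<omega>2 * norm d + \<omega>1 * N + \<omega>1 * vth * (N + norm d)"
    by linarith
qed

lemma ball_kappa_subset:
  assumes "0 < R"
  shows "ball xs (kappa R \<Omega> xs) \<subseteq> \<Omega>"
proof
  fix z assume z: "z \<in> ball xs (kappa R \<Omega> xs)"
  define S where "S = {t. 0 \<le> t \<and> t < R \<and> ball xs t \<subseteq> \<Omega>}"
  have "S \<noteq> {}" using assms unfolding S_def by (auto intro!: exI[of _ 0])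
  moreover have "bdd_above S" unfolding S_def by (auto intro!: bdd_aboveI[of _ R])
  moreover have "dist xs z < Sup S" using z unfolding kappa_def S_def by simp
  ultimately obtain t where "t \<in> S" "dist xs z < t" using less_cSup_iff by blast
  thus "z \<in> \<Omega>" unfolding S_def by auto
qed

locale majorant_condition =
  fixes F :: "real^'n \<Rightarrow> real^'n" and F' :: "real^'n \<Rightarrow> real^'n^'n"
    and xs :: "real^'n" and K R :: real and f df :: "real \<Rightarrow> real"
  assumes F_deriv: "\<And>z. z \<in> ball xs K \<Longrightarrow> (F has_derivative (\<lambda>h. F' z *v h)) (at z)"
    and majorant: "\<And>\<tau> z. \<tau> \<in> {0..1} \<Longrightarrow> z \<in> ball xs K \<Longrightarrow>
        opnorm (matrix_inv (F' xs) ** (F' z - F' (xs + \<tau> *\<^sub>R (z - xs))))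
          \<le> df (norm (z - xs)) - df (\<tau> * norm (z - xs))"
    and F_xs: "F xs = 0" and F'_xs_inv: "invertible (F' xs)"
    and R_pos: "0 < R"
    and f_deriv: "\<And>t. t \<in> {0..<R} \<Longrightarrow> (f has_real_derivative df t) (at t within {0..<R})"
    and df_cont: "continuous_on {0..<R} df"
    and f0: "f 0 = 0" and df0: "df 0 = -1"
    and df_strict_mono: "strict_mono_on {0..<R} df"
begin

lemma f_has_real_derivative: "0 < t \<Longrightarrow> t < R \<Longrightarrow> (f has_real_derivative df t) (at t)"
  using f_deriv[of t] at_within_interior[of t "{0..<R}"] by simp

lemma df_tendsto_at_0: "(df \<longlongrightarrow> -1) (at 0 within {0..<R})"
  using df_cont R_pos unfolding continuous_on_def df0[symmetric] by auto

lemma df_eventually_neg: "eventually (\<lambda>t. df t < 0) (at 0 within {0..<R})"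
  using df_tendsto_at_0 by (rule order_tendstoD(2)) simp

lemma
  shows nu_pos: "0 < nu R df"
    and nu_le_R: "nu R df \<le> R"
    and df_neg_below_nu: "\<And>t. 0 \<le> t \<Longrightarrow> t < nu R df \<Longrightarrow> df t < 0 \<and> t < R"
proof -
  define S where "S = {t. 0 \<le> t \<and> t < R \<and> df t < 0}"
  have nu: "nu R df = Sup S" unfolding nu_def S_def ..
  have ne: "S \<noteq> {}" using R_pos df0 unfolding S_def by (auto intro!: exI[of _ 0])
  have bdd: "bdd_above S" unfolding S_def by (auto intro!: bdd_aboveI[of _ R])
  obtain d where d: "0 < d" "\<And>t. t \<in> {0..<R} \<Longrightarrow> t \<noteq> 0 \<Longrightarrow> dist t 0 < d \<Longrightarrow> df t < 0"
    using df_eventually_neg unfolding eventually_at by blast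
  have "min d R / 2 \<in> S" unfolding S_def using d R_pos by (auto intro!: d(2))
  hence "min d R / 2 \<le> nu R df" unfolding nu using bdd by (rule cSup_upper)
  thus "0 < nu R df" using d R_pos by linarith
  show "nu R df \<le> R" unfolding nu using ne unfolding S_def by (intro cSup_least) auto
  fix t assume t: "0 \<le> t" "t < nu R df"
  then obtain t' where "t' \<in> S" "t < t'" using less_cSup_iff[OF ne bdd] unfolding nu by blast
  thus "df t < 0 \<and> t < R"
    using t strict_mono_onD[OF df_strict_mono, of t t'] unfolding S_def by auto
qed

lemma majorant_ratio_tendsto: "((\<lambda>t. f t / (t * df t) - 1) \<longlongrightarrow> 0) (at 0 within {0..<R})"
proof -
  have "((\<lambda>t. f t / t) \<longlongrightarrow> -1) (at 0 within {0..<R})"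
    using f_deriv[of 0] R_pos f0 df0 by (simp add: has_field_derivative_iff)
  with df_tendsto_at_0 have "((\<lambda>t. (f t / t) / df t - 1) \<longlongrightarrow> (-1) / (-1) - 1) (at 0 within {0..<R})"
    by (intro tendsto_intros) auto
  thus ?thesis by simp
qed

lemma
  fixes \<omega>1 \<omega>2 vth lam :: real
  assumes "\<omega>1 * ((1 + vth) * lam + vth) + \<omega>2 < 1"
  shows rho_le_nu: "rho R f df \<omega>1 \<omega>2 vth lam \<le> nu R df"
    and below_rho: "\<And>t. 0 < t \<Longrightarrow> t < rho R f df \<omega>1 \<omega>2 vth lam \<Longrightarrow>
        \<omega>1 * (1 + vth) * (1 + lam) * (f t / (t * df t) - 1) + \<omega>1 * ((1 + vth) * lam + vth) + \<omega>2 < 1"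
proof -
  define q where "q t = \<omega>1 * (1 + vth) * (1 + lam) * (f t / (t * df t) - 1)
      + \<omega>1 * ((1 + vth) * lam + vth) + \<omega>2" for t
  define S where "S = {\<delta>. 0 < \<delta> \<and> \<delta> < nu R df \<and> (\<forall>t. 0 < t \<and> t < \<delta> \<longrightarrow> q t < 1)}"
  have rho: "rho R f df \<omega>1 \<omega>2 vth lam = Sup S" unfolding rho_def S_def q_def ..
  have "(q \<longlongrightarrow> \<omega>1 * (1 + vth) * (1 + lam) * 0 + \<omega>1 * ((1 + vth) * lam + vth) + \<omega>2)
      (at 0 within {0..<R})"
    unfolding q_def by (intro tendsto_intros majorant_ratio_tendsto)
  hence "eventually (\<lambda>t. q t < 1) (at 0 within {0..<R})"
    using assms by (intro order_tendstoD(2)) auto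
  then obtain d where d: "0 < d" "\<And>t. t \<in> {0..<R} \<Longrightarrow> t \<noteq> 0 \<Longrightarrow> dist t 0 < d \<Longrightarrow> q t < 1"
    unfolding eventually_at by blast
  have "min d (nu R df / 2) \<in> S"
    unfolding S_def using d nu_pos nu_le_R by (auto intro!: d(2))
  hence ne: "S \<noteq> {}" by blast
  show "rho R f df \<omega>1 \<omega>2 vth lam \<le> nu R df" unfolding rho using ne unfolding S_def
    by (intro cSup_least) auto
  fix t assume t: "0 < t" "t < rho R f df \<omega>1 \<omega>2 vth lam"
  moreover have "bdd_above S" unfolding S_def by (auto intro!: bdd_aboveI[of _ "nu R df"])
  ultimately obtain \<delta> where "\<delta> \<in> S" "t < \<delta>" using less_cSup_iff[OF ne] rho by auto
  thus "q t < 1" using t unfolding S_def by auto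
qed

lemma
  assumes x: "x \<in> ball xs K" and neg: "df (norm (x - xs)) < 0"
  shows invertible_jacobian: "invertible (F' x)"
    and norm_jacobian_inv_le: "norm (matrix_inv (F' x) *v (F' xs *v v)) \<le> norm v / - df (norm (x - xs))"
proof -
  define A0 where "A0 = matrix_inv (F' xs)"
  define t where "t = norm (x - xs)"
  note A0 = matrix_vector_mul_matrix_inv[OF F'_xs_inv, folded A0_def]
  have below: "- df t * norm w \<le> norm (A0 *v (F' x *v w))" for w
  proof -
    have "(A0 ** (F' x - F' xs)) *v w = A0 *v (F' x *v w) - w"
      by (simp add: matrix_vector_mul_assoc[symmetric] matrix_vector_mult_diff_rdistrib
          matrix_vector_mult_diff_distrib A0)
    hence "norm (A0 *v (F' x *v w) - w) \<le> opnorm (A0 ** (F' x - F' xs)) * norm w"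
      by (metis norm_matrix_vector_le_opnorm)
    also have "\<dots> \<le> (df t + 1) * norm w"
      using majorant[of 0 x] x df0 unfolding A0_def t_def by (simp add: mult_right_mono)
    finally show ?thesis using norm_triangle_ineq2[of w "A0 *v (F' x *v w)"]
      by (simp add: norm_minus_commute algebra_simps)
  qed
  have "invertible (A0 ** F' x)"
    using below neg unfolding t_def
    by (intro invertible_if_norm_bounded_below[of "- df t"]) (simp_all add: matrix_vector_mul_assoc t_def)
  moreover have "F' x = F' xs ** (A0 ** F' x)"
    using matrix_mul_matrix_inv(1)[OF F'_xs_inv] unfolding A0_def by (simp add: matrix_mul_assoc)
  ultimately show inv: "invertible (F' x)" by (metis invertible_mult F'_xs_inv)
  have "A0 *v (F' x *v (matrix_inv (F' x) *v (F' xs *v v))) = v"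
    using matrix_vector_mul_matrix_inv(1)[OF inv] A0 by simp
  with below[of "matrix_inv (F' x) *v (F' xs *v v)"] neg
  show "norm (matrix_inv (F' x) *v (F' xs *v v)) \<le> norm v / - df (norm (x - xs))"
    unfolding t_def by (simp add: field_simps)
qed

lemma continuous_deriv_f_scaled:
  assumes "0 < t" "t < R"
  shows "continuous_on {0..1} (\<lambda>\<tau>. f (\<tau> * t))"
    and "\<And>\<tau>. 0 < \<tau> \<Longrightarrow> \<tau> < 1 \<Longrightarrow> ((\<lambda>\<tau>. f (\<tau> * t)) has_real_derivative df (\<tau> * t) * t) (at \<tau>)"
proof -
  have scaled: "0 \<le> \<tau> * t \<and> \<tau> * t < R" if "0 \<le> \<tau>" "\<tau> \<le> 1" for \<tau>
    using assms that mult_left_le_one_le[of t \<tau>] by (simp, linarith)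
  have "continuous_on {0..<R} f"
    using f_deriv by (intro DERIV_continuous_on) blast
  thus "continuous_on {0..1} (\<lambda>\<tau>. f (\<tau> * t))"
    by (rule continuous_on_compose2) (auto intro!: continuous_intros dest: scaled)
  fix \<tau> :: real assume "0 < \<tau>" "\<tau> < 1"
  hence "(f has_real_derivative df (\<tau> * t)) (at (\<tau> * t))"
    using scaled assms by (intro f_has_real_derivative) auto
  thus "((\<lambda>\<tau>. f (\<tau> * t)) has_real_derivative df (\<tau> * t) * t) (at \<tau>)"
    by (rule DERIV_chain2) (auto intro!: derivative_eq_intros)
qed

lemma linearization_error_le:
  assumes x: "x \<in> ball xs K" and pos: "0 < norm (x - xs)" and below_R: "norm (x - xs) < R"
  shows "norm (matrix_inv (F' xs) *v (F x - F' x *v (x - xs)))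
    \<le> norm (x - xs) * df (norm (x - xs)) - f (norm (x - xs))"
proof -
  define A0 where "A0 = matrix_inv (F' xs)"
  define d where "d = x - xs"
  define t where "t = norm d"
  define \<Phi> where "\<Phi> \<tau> = A0 *v (F (xs + \<tau> *\<^sub>R d) - \<tau> *\<^sub>R (F' x *v d))" for \<tau>
  define \<Phi>' where "\<Phi>' \<tau> = A0 *v (F' (xs + \<tau> *\<^sub>R d) *v d - F' x *v d)" for \<tau>
  define \<psi> where "\<psi> \<tau> = \<tau> * t * df t - f (\<tau> * t)" for \<tau>
  have segment: "xs + \<tau> *\<^sub>R d \<in> ball xs K" if "\<tau> \<in> {0..1}" for \<tau>
    using x that mult_left_le_one_le[of "norm d" \<tau>]
    by (simp add: dist_norm d_def norm_minus_commute)
  have \<Phi>_deriv: "(\<Phi> has_vector_derivative \<Phi>' \<tau>) (at \<tau>)" if "\<tau> \<in> {0..1}" for \<tau>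
  proof -
    have "((\<lambda>\<tau>. xs + \<tau> *\<^sub>R d) has_derivative (\<lambda>h. h *\<^sub>R d)) (at \<tau>)"
      by (auto intro!: derivative_eq_intros)
    from has_derivative_compose[OF this F_deriv[OF segment[OF that]]]
    have "((\<lambda>\<tau>. F (xs + \<tau> *\<^sub>R d)) has_derivative (\<lambda>h. F' (xs + \<tau> *\<^sub>R d) *v (h *\<^sub>R d))) (at \<tau>)"
      by (simp add: o_def)
    hence "(\<Phi> has_derivative (\<lambda>h. A0 *v (F' (xs + \<tau> *\<^sub>R d) *v (h *\<^sub>R d) - h *\<^sub>R (F' x *v d))))
        (at \<tau>)"
      unfolding \<Phi>_def
      by (intro bounded_linear.has_derivative[OF matrix_vector_mul_bounded_linear]
          derivative_eq_intros) auto
    thus ?thesis unfolding has_vector_derivative_def \<Phi>'_def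
      by (simp add: matrix_vector_mult_scaleR matrix_vector_mult_diff_distrib scaleR_diff_right)
  qed
  have \<psi>_deriv: "(\<psi> has_vector_derivative t * df t - df (\<tau> * t) * t) (at \<tau>)"
    if "0 < \<tau>" "\<tau> < 1" for \<tau>
    using continuous_deriv_f_scaled(2)[of t \<tau>] that pos below_R unfolding \<psi>_def t_def d_def
    by (auto intro!: derivative_eq_intros simp: has_real_derivative_iff_has_vector_derivative[symmetric])
  have \<Phi>'_le: "norm (\<Phi>' \<tau>) \<le> t * df t - df (\<tau> * t) * t" if "0 < \<tau>" "\<tau> < 1" for \<tau>
  proof -
    have "\<Phi>' \<tau> = - ((A0 ** (F' x - F' (xs + \<tau> *\<^sub>R d))) *v d)"
      unfolding \<Phi>'_def by (simp add: matrix_vector_mul_assoc[symmetric]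
          matrix_vector_mult_diff_rdistrib matrix_vector_mult_diff_distrib)
    hence "norm (\<Phi>' \<tau>) \<le> opnorm (A0 ** (F' x - F' (xs + \<tau> *\<^sub>R d))) * t"
      unfolding t_def by (metis norm_matrix_vector_le_opnorm norm_minus_cancel)
    also have "\<dots> \<le> (df t - df (\<tau> * t)) * t"
      using majorant[of \<tau> x] x that unfolding A0_def t_def d_def by (simp add: mult_right_mono)
    finally show ?thesis by (simp add: algebra_simps)
  qed
  have "norm (\<Phi> 1 - \<Phi> 0) \<le> \<psi> 1 - \<psi> 0"
  proof (rule differentiable_bound_general[OF zero_less_one _ _ _ \<psi>_deriv \<Phi>'_le])
    show "continuous_on {0..1} \<Phi>"
      using \<Phi>_deriv by (intro continuous_at_imp_continuous_on ballI has_vector_derivative_continuous)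
    show "continuous_on {0..1} \<psi>"
      using continuous_deriv_f_scaled(1)[of t] pos below_R unfolding \<psi>_def t_def d_def
      by (intro continuous_intros) auto
  qed (use \<Phi>_deriv in auto)
  moreover have "\<Phi> 1 - \<Phi> 0 = A0 *v (F x - F' x *v d)"
    unfolding \<Phi>_def d_def using F_xs by (simp add: matrix_vector_mult_diff_distrib)
  ultimately show ?thesis unfolding \<psi>_def A0_def t_def d_def using f0 by simp
qed

lemma newton_error_le:
  assumes x: "x \<in> ball xs K" and pos: "0 < norm (x - xs)" and below_nu: "norm (x - xs) < nu R df"
  shows "invertible (F' x)"
    and "norm (matrix_inv (F' x) *v F x - (x - xs))
      \<le> f (norm (x - xs)) / df (norm (x - xs)) - norm (x - xs)"
proof -
  define t where "t = norm (x - xs)"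
  have neg: "df t < 0" and below_R: "t < R" using df_neg_below_nu[of t] pos below_nu by (auto simp: t_def)
  show inv: "invertible (F' x)" using invertible_jacobian x neg unfolding t_def .
  have "matrix_inv (F' x) *v F x - (x - xs)
      = matrix_inv (F' x) *v (F' xs *v (matrix_inv (F' xs) *v (F x - F' x *v (x - xs))))"
    by (simp add: matrix_vector_mul_matrix_inv[OF F'_xs_inv] matrix_vector_mul_matrix_inv[OF inv]
        matrix_vector_mult_diff_distrib)
  also have "norm \<dots> \<le> (t * df t - f t) / - df t"
    using norm_jacobian_inv_le[OF x] linearization_error_le[OF x pos] neg below_R
    unfolding t_def by (smt (verit) divide_right_mono)
  also have "\<dots> = f t / df t - t" using neg by (simp add: field_simps)
  finally show "norm (matrix_inv (F' x) *v F x - (x - xs)) \<le> f t / df t - t" .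
qed

end

lemma decreasing_tendsto_zero:
  fixes t :: "nat \<Rightarrow> real" and g :: "real \<Rightarrow> real"
  assumes pos: "\<And>k. 0 < t k" and dec: "\<And>k. t (Suc k) < t k"
    and step: "\<And>k. t (Suc k) \<le> g (t k)"
    and g: "\<And>s. 0 < s \<Longrightarrow> s \<le> t 0 \<Longrightarrow> g s < s \<and> isCont g s"
  shows "t \<longlonglongrightarrow> 0"
proof -
  have "decseq t" using dec by (intro decseq_SucI less_imp_le)
  then obtain L where L: "t \<longlonglongrightarrow> L" "\<And>k. L \<le> t k"
    using decseq_convergent[of t 0] pos by (metis less_imp_le)
  have "L \<le> 0"
  proof (rule ccontr)
    assume "\<not> L \<le> 0"
    with g[of L] L(2)[of 0] have gL: "g L < L" "isCont g L" by auto
    have "(\<lambda>k. t (Suc k)) \<longlonglongrightarrow> L" using LIMSEQ_Suc[OF L(1)] .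
    moreover have "(\<lambda>k. g (t k)) \<longlonglongrightarrow> g L" using isCont_tendsto_compose[OF gL(2) L(1)] .
    ultimately have "L \<le> g L" using step by (intro LIMSEQ_le) auto
    thus False using gL(1) by simp
  qed
  moreover have "0 \<le> L" using L(1) pos by (intro LIMSEQ_le_const) (auto intro: less_imp_le)
  ultimately show ?thesis using L(1) by simp
qed

lemma limsup_le_sqrt_limsup:
  fixes r a \<theta> :: "nat \<Rightarrow> real"
  assumes a: "a \<longlonglongrightarrow> 0" and \<theta>: "\<And>k. 0 \<le> \<theta> k" "\<And>k. \<theta> k \<le> U" and "0 \<le> c"
    and r: "\<And>k. r k \<le> a k + c * sqrt (2 * \<theta> k) + D"
  shows "limsup (\<lambda>k. ereal (r k))
    \<le> ereal (c * sqrt (2 * real_of_ereal (limsup (\<lambda>k. ereal (\<theta> k)))) + D)"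
proof -
  define T where "T = limsup (\<lambda>k. ereal (\<theta> k))"
  have "T \<le> ereal U" "0 \<le> T" unfolding T_def using \<theta> by (auto intro: Limsup_bounded le_Limsup)
  then obtain T' where T': "T = ereal T'" "0 \<le> T'" by (cases T) auto
  define s where "s = sqrt (2 * T')"
  have s: "0 \<le> s" "s\<^sup>2 = 2 * T'" unfolding s_def using T' by simp_all
  show ?thesis unfolding T_def[symmetric] T'(1) s_def[symmetric] real_of_ereal.simps
  proof (rule ereal_le_epsilon2)
    fix e :: real assume e: "0 < e"
    define \<delta> where "\<delta> = e / (2 * (c + 1))"
    have \<delta>: "0 < \<delta>" "c * \<delta> \<le> e / 2"
      unfolding \<delta>_def using e \<open>0 \<le> c\<close> by (auto simp: field_simps)
    have "2 * T' < (s + \<delta>)\<^sup>2"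
      using s \<delta>(1) by (simp add: power2_sum add_pos_nonneg)
    hence "eventually (\<lambda>k. ereal (\<theta> k) < ereal ((s + \<delta>)\<^sup>2 / 2)) sequentially"
      using T'(1) unfolding T_def by (intro Limsup_lessD) simp
    moreover have "eventually (\<lambda>k. a k < e / 2) sequentially"
      using a e by (intro order_tendstoD(2)) auto
    ultimately have "eventually (\<lambda>k. ereal (r k) \<le> ereal (c * s + D) + ereal e) sequentially"
    proof eventually_elim
      case (elim k)
      hence "sqrt (2 * \<theta> k) < s + \<delta>"
        using s(1) \<delta>(1) real_sqrt_less_mono[of "2 * \<theta> k" "(s + \<delta>)\<^sup>2"] by simp
      hence "c * sqrt (2 * \<theta> k) \<le> c * s + e / 2"
        using \<open>0 \<le> c\<close> \<delta>(2) by (smt (verit) distrib_left mult_left_mono)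
      thus ?case using elim(2) r[of k] by simp
    qed
    thus "limsup (\<lambda>k. ereal (r k)) \<le> ereal (c * s + D) + ereal e" by (rule Limsup_bounded)
  qed
qed

locale inl_condG = majorant_condition +
  fixes C :: "(real^'n) set" and vth \<omega>1 \<omega>2 lam :: real
    and x y s r :: "nat \<Rightarrow> real^'n" and M P :: "nat \<Rightarrow> real^'n^'n" and \<theta> \<eta> :: "nat \<Rightarrow> real"
  assumes C_convex: "convex C" and xs_C: "xs \<in> C"
    and vth_nonneg: "0 \<le> vth" and \<omega>1_pos: "0 < \<omega>1" and lam_nonneg: "0 \<le> lam"
    and contraction_const: "\<omega>1 * ((1 + vth) * lam + vth) + \<omega>2 < 1"
    and x0_C: "x 0 \<in> C" and x0_ball: "x 0 \<in> ball xs (min K (rho R f df \<omega>1 \<omega>2 vth lam))"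
    and \<theta>_nonneg: "\<And>k. 0 \<le> \<theta> k" and \<theta>_le: "\<And>k. \<theta> k \<le> lam\<^sup>2 / 2"
    and no_stop: "\<And>k. F (x k) \<noteq> 0"
    and M_inv: "\<And>k. invertible (M k)"
    and newton_eq: "\<And>k. M k *v s k = - F (x k) + r k"
    and y_eq: "\<And>k. y k = x k + s k"
    and x_next: "\<And>k. condG C (y k) (\<theta> k * (norm (s k))\<^sup>2) (x k) (x (Suc k))"
    and M_bound1: "\<And>k. opnorm (matrix_inv (M k) ** F' (x k)) \<le> \<omega>1"
    and M_bound2: "\<And>k. opnorm (matrix_inv (M k) ** F' (x k) - mat 1) \<le> \<omega>2"
    and P_inv: "\<And>k. invertible (P k)"
    and residual: "\<And>k. norm (P k *v r k) \<le> \<eta> k * norm (P k *v F (x k))"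
    and forcing: "\<And>k. \<eta> k * cond (P k ** F' (x k)) \<le> vth"
begin

abbreviation "radius \<equiv> min K (rho R f df \<omega>1 \<omega>2 vth lam)"
abbreviation "err k \<equiv> norm (x k - xs)"
abbreviation "ef t \<equiv> f t / df t - t"
abbreviation "coeff_ef \<equiv> \<omega>1 * (1 + vth) * (1 + lam)"
abbreviation "coeff_lin \<equiv> \<omega>1 * ((1 + vth) * lam + vth) + \<omega>2"

lemma err_pos: "0 < err k"
  using no_stop[of k] F_xs by auto

lemma sqrt_2\<theta>_le: "sqrt (2 * \<theta> k) \<le> lam"
  using real_sqrt_le_mono[of "2 * \<theta> k" "lam\<^sup>2"] \<theta>_le[of k] lam_nonneg by simp

lemma
  assumes xk: "x k \<in> C" and err_k: "err k < radius"
  shows iterate_Suc_mem: "x (Suc k) \<in> C"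
    and ef_nonneg: "0 \<le> ef (err k)"
    and err_Suc_le: "err (Suc k) \<le> \<omega>1 * (1 + vth) * (1 + sqrt (2 * \<theta> k)) * ef (err k)
        + (\<omega>1 * ((1 + vth) * sqrt (2 * \<theta> k) + vth) + \<omega>2) * err k"
proof -
  define c where "c = sqrt (2 * \<theta> k)"
  define N where "N = ef (err k)"
  have "x k \<in> ball xs K" using err_k by (simp add: dist_norm norm_minus_commute)
  moreover have "err k < nu R df" using err_k rho_le_nu[OF contraction_const] by linarith
  ultimately have newton: "invertible (F' (x k))" "norm (matrix_inv (F' (x k)) *v F (x k) - (x k - xs)) \<le> N"
    using newton_error_le[OF _ err_pos] unfolding N_def by blast+
  have res: "norm (matrix_inv (F' (x k)) *v r k) \<le> vth * norm (matrix_inv (F' (x k)) *v F (x k))"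
    using residual_le_forcing[OF newton(1) P_inv residual forcing vth_nonneg] .
  note step = inexact_newton_step_le[OF newton(1) M_inv newton_eq M_bound1 M_bound2 res
      newton(2) vth_nonneg]
  show "0 \<le> ef (err k)" using newton(2) norm_ge_zero order_trans unfolding N_def by blast
  have "0 \<le> \<theta> k * (norm (s k))\<^sup>2" using \<theta>_nonneg by simp
  note proj = condG_approx_projection[OF x_next C_convex xk this]
  show "x (Suc k) \<in> C" using proj by blast
  have "err (Suc k) \<le> norm (y k - xs) + sqrt (2 * (\<theta> k * (norm (s k))\<^sup>2))"
    using proj xs_C \<open>0 \<le> \<theta> k * (norm (s k))\<^sup>2\<close> by (intro approx_projection_dist_le) auto
  also have "\<dots> = norm ((x k - xs) + s k) + c * norm (s k)"
    unfolding y_eq c_def by (simp add: real_sqrt_mult algebra_simps)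
  also have "\<dots> \<le> (\<omega>2 * err k + \<omega>1 * N + \<omega>1 * vth * (N + err k))
      + c * (\<omega>1 * (1 + vth) * (N + err k))"
    using step c_def \<theta>_nonneg by (intro add_mono mult_left_mono) auto
  also have "\<dots> = \<omega>1 * (1 + vth) * (1 + c) * N + (\<omega>1 * ((1 + vth) * c + vth) + \<omega>2) * err k"
    by (simp add: algebra_simps)
  finally show "err (Suc k) \<le> \<omega>1 * (1 + vth) * (1 + c) * N
      + (\<omega>1 * ((1 + vth) * c + vth) + \<omega>2) * err k" .
qed

lemma err_Suc_le_uniform:
  assumes "x k \<in> C" "err k < radius"
  shows "err (Suc k) \<le> coeff_ef * ef (err k) + coeff_lin * err k"
proof -
  define N where "N = ef (err k)"
  define c where "c = sqrt (2 * \<theta> k)"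
  have "0 \<le> \<omega>1 * (1 + vth) * ((lam - c) * (N + err k))"
    using \<omega>1_pos vth_nonneg sqrt_2\<theta>_le[of k] ef_nonneg[OF assms] err_pos[of k]
    unfolding N_def c_def by (intro mult_nonneg_nonneg; linarith)
  moreover have "err (Suc k) \<le> \<omega>1 * (1 + vth) * (1 + c) * N
      + (\<omega>1 * ((1 + vth) * c + vth) + \<omega>2) * err k"
    using err_Suc_le[OF assms] unfolding N_def c_def .
  ultimately have "err (Suc k) \<le> coeff_ef * N + coeff_lin * err k"
    by (simp add: algebra_simps)
  thus ?thesis unfolding N_def .
qed

lemma contraction_below_rho:
  assumes "0 < t" "t < rho R f df \<omega>1 \<omega>2 vth lam"
  shows "coeff_ef * ef t + coeff_lin * t < t"
proof -
  have "df t \<noteq> 0"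
    using df_neg_below_nu[of t] rho_le_nu[OF contraction_const] assms by auto
  hence "coeff_ef * ef t + coeff_lin * t
      = t * (coeff_ef * (f t / (t * df t) - 1) + coeff_lin)"
    using assms(1) by (simp add: field_simps)
  also have "\<dots> < t" using below_rho[OF contraction_const assms] assms(1) by simp
  finally show ?thesis .
qed

lemma err_Suc_less_of_mem:
  assumes "x k \<in> C" "err k < radius"
  shows "err (Suc k) < err k"
  using err_Suc_le_uniform[OF assms] contraction_below_rho[OF err_pos] assms(2) by fastforce

lemma iterate_mem_and_err_less: "x k \<in> C \<and> err k < radius"
proof (induction k)
  case 0
  show ?case using x0_C x0_ball by (simp add: dist_norm norm_minus_commute)
next
  case (Suc k)
  thus ?case using iterate_Suc_mem err_Suc_less_of_mem by fastforce
qed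

lemma err_Suc_less: "err (Suc k) < err k"
  using err_Suc_less_of_mem iterate_mem_and_err_less by blast

lemma iterates_in_ball: "\<forall>k. x k \<in> ball xs radius \<inter> C"
  using iterate_mem_and_err_less by (simp add: dist_norm norm_minus_commute)

lemma err_le_err0: "err k \<le> err 0"
  by (induction k) (auto intro: order_trans less_imp_le[OF err_Suc_less])

lemma err_tendsto_0: "(\<lambda>k. err k) \<longlonglongrightarrow> 0"
proof (rule decreasing_tendsto_zero[where g="\<lambda>t. coeff_ef * ef t + coeff_lin * t"])
  show "0 < err k" "err (Suc k) < err k" for k using err_pos err_Suc_less .
  show "err (Suc k) \<le> coeff_ef * ef (err k) + coeff_lin * err k" for k
    using err_Suc_le_uniform iterate_mem_and_err_less by blast
  fix t assume t: "0 < t" "t \<le> err 0"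
  hence below_rho: "t < rho R f df \<omega>1 \<omega>2 vth lam"
    using iterate_mem_and_err_less[of 0] by linarith
  hence "df t < 0" "t < R"
    using df_neg_below_nu[of t] rho_le_nu[OF contraction_const] t by auto
  moreover have "isCont df t"
    using continuous_on_interior[OF df_cont] \<open>t < R\<close> t by (simp add: interior_atLeastLessThan)
  ultimately have "isCont (\<lambda>t. coeff_ef * ef t + coeff_lin * t) t"
    using DERIV_isCont[OF f_has_real_derivative] t by (intro continuous_intros) auto
  thus "coeff_ef * ef t + coeff_lin * t < t \<and> isCont (\<lambda>t. coeff_ef * ef t + coeff_lin * t) t"
    using contraction_below_rho[OF t(1) below_rho] by blast
qed

lemma iterates_tendsto: "x \<longlonglongrightarrow> xs"
  using err_tendsto_0 by (simp add: tendsto_norm_zero_iff LIM_zero_iff)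

lemma err_in_nu: "err k \<in> {0<..<nu R df}"
  using err_pos[of k] iterate_mem_and_err_less[of k] rho_le_nu[OF contraction_const] by auto

lemma newton_ratio_tendsto_0: "(\<lambda>k. ef (err k) / err k) \<longlonglongrightarrow> 0"
proof -
  have "err k \<in> {0..<R} \<and> err k \<noteq> 0" for k using err_in_nu[of k] nu_le_R by auto
  hence "eventually (\<lambda>k. err k \<in> {0..<R} \<and> err k \<noteq> 0) sequentially" by simp
  hence "filterlim (\<lambda>k. err k) (at 0 within {0..<R}) sequentially"
    using err_tendsto_0 by (simp add: filterlim_at)
  from filterlim_compose[OF majorant_ratio_tendsto this]
  have "(\<lambda>k. f (err k) / (err k * df (err k)) - 1) \<longlonglongrightarrow> 0" .
  moreover have "f (err k) / (err k * df (err k)) - 1 = ef (err k) / err k" for k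
    using err_pos[of k] by (simp add: field_simps)
  ultimately show ?thesis by simp
qed

lemma err_ratio_le:
  "err (Suc k) / err k
    \<le> coeff_ef * (ef (err k) / err k) + \<omega>1 * (1 + vth) * sqrt (2 * \<theta> k) + (\<omega>1 * vth + \<omega>2)"
proof -
  define a where "a = ef (err k) / err k"
  define c where "c = sqrt (2 * \<theta> k)"
  have t: "0 < err k" using err_pos .
  have a: "0 \<le> a" unfolding a_def
    using ef_nonneg iterate_mem_and_err_less t by simp
  have "ef (err k) = a * err k" unfolding a_def using t by simp
  hence "err (Suc k) \<le> \<omega>1 * (1 + vth) * (1 + c) * (a * err k)
      + (\<omega>1 * ((1 + vth) * c + vth) + \<omega>2) * err k"
    using err_Suc_le[of k] iterate_mem_and_err_less[of k] unfolding c_def by simp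
  hence "err (Suc k) / err k \<le> \<omega>1 * (1 + vth) * (1 + c) * a + (\<omega>1 * ((1 + vth) * c + vth) + \<omega>2)"
    using t by (simp add: pos_divide_le_eq algebra_simps)
  also have "\<dots> \<le> coeff_ef * a + \<omega>1 * (1 + vth) * c + (\<omega>1 * vth + \<omega>2)"
  proof -
    have "\<omega>1 * (1 + vth) * (c * a) \<le> \<omega>1 * (1 + vth) * (lam * a)"
      using sqrt_2\<theta>_le[of k] a \<omega>1_pos vth_nonneg unfolding c_def
      by (intro mult_left_mono mult_right_mono) auto
    thus ?thesis by (simp add: algebra_simps)
  qed
  finally show ?thesis unfolding a_def c_def .
qed

lemma err_ratio_limsup_le:
  "limsup (\<lambda>k. ereal (err (Suc k) / err k))
    \<le> ereal (\<omega>1 * ((1 + vth) * sqrt (2 * real_of_ereal (limsup (\<lambda>k. ereal (\<theta> k)))) + vth) + \<omega>2)"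
proof -
  from limsup_le_sqrt_limsup[OF tendsto_mult_right_zero[OF newton_ratio_tendsto_0]
      \<theta>_nonneg \<theta>_le _ err_ratio_le]
  show ?thesis using \<omega>1_pos vth_nonneg by (simp add: algebra_simps)
qed

lemma err_Suc_le_powr:
  assumes "strict_mono_on {0<..<nu R df} (\<lambda>t. (f t / df t - t) / t powr (p + 1))"
  shows "err (Suc k) \<le> coeff_ef * ef (err 0) * (err k / err 0) powr (p + 1) + coeff_lin * err k"
proof -
  define g where "g t = (f t / df t - t) / t powr (p + 1)" for t
  have "g (err k) \<le> g (err 0)"
    using strict_mono_on_leD[OF assms err_in_nu err_in_nu err_le_err0] unfolding g_def .
  hence "g (err k) * err k powr (p + 1) \<le> g (err 0) * err k powr (p + 1)"
    by (rule mult_right_mono) simp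
  hence "ef (err k) \<le> ef (err 0) * (err k / err 0) powr (p + 1)"
    unfolding g_def using err_pos[of k] err_pos[of 0] by (simp add: powr_divide)
  hence "coeff_ef * ef (err k) \<le> coeff_ef * ef (err 0) * (err k / err 0) powr (p + 1)"
    using \<omega>1_pos vth_nonneg lam_nonneg by (simp add: mult.assoc mult_left_mono)
  thus ?thesis using err_Suc_le_uniform iterate_mem_and_err_less by (smt (verit))
qed

end

theorem theorem1:
  fixes \<Omega> C :: "(real^'n) set"
    and F :: "real^'n \<Rightarrow> real^'n"
    and F' :: "real^'n \<Rightarrow> real^'n^'n"
    and xs :: "real^'n"
    and R :: real and f df :: "real \<Rightarrow> real"
    and vth \<omega>1 \<omega>2 lam :: real
    and x y s r :: "nat \<Rightarrow> real^'n"
    and M P :: "nat \<Rightarrow> real^'n^'n"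
    and \<theta> \<eta> :: "nat \<Rightarrow> real"
  assumes \<Omega>_open: "open \<Omega>"
    and F_deriv: "\<forall>z\<in>\<Omega>. (F has_derivative (\<lambda>h. F' z *v h)) (at z)"
    and F'_cont: "continuous_on \<Omega> F'"
    and C_sub: "C \<subseteq> \<Omega>" and C_convex: "convex C" and C_compact: "compact C"
    and C_ne: "C \<noteq> {}"
    and xs_C: "xs \<in> C" and F_xs: "F xs = 0" and F'_xs_inv: "invertible (F' xs)"
    and R_pos: "R > 0"
    and f_deriv: "\<forall>t\<in>{0..<R}. (f has_real_derivative df t) (at t within {0..<R})"
    and df_cont: "continuous_on {0..<R} df"
    and majorant: "\<forall>\<tau>\<in>{0..1}. \<forall>z\<in>ball xs (kappa R \<Omega> xs).
        opnorm (matrix_inv (F' xs) ** (F' z - F' (xs + \<tau> *\<^sub>R (z - xs))))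
          \<le> df (norm (z - xs)) - df (\<tau> * norm (z - xs))"
    and h1: "f 0 = 0" "df 0 = -1"
    and h2: "strict_mono_on {0..<R} df"
    and vth_bounds: "0 \<le> vth" "vth < 1"
    and \<omega>_bounds: "0 \<le> \<omega>2" "\<omega>2 < \<omega>1" "\<omega>1 * vth + \<omega>2 < 1"
    and lam_bounds: "0 \<le> lam" "lam < (1 - \<omega>2 - \<omega>1 * vth) / (\<omega>1 * (1 + vth))"
    and x0: "x 0 \<in> C" "x 0 \<in> ball xs (min (kappa R \<Omega> xs) (rho R f df \<omega>1 \<omega>2 vth lam))"
      "x 0 \<noteq> xs"
    and \<theta>_bounds: "\<forall>k. 0 \<le> \<theta> k \<and> \<theta> k \<le> lam\<^sup>2 / 2"
    and no_stop: "\<forall>k. F (x k) \<noteq> 0"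
    and M_inv: "\<forall>k. invertible (M k)"
    and newton_eq: "\<forall>k. M k *v s k = - F (x k) + r k"
    and y_def: "\<forall>k. y k = x k + s k"
    and x_next: "\<forall>k. condG C (y k) (\<theta> k * (norm (s k))\<^sup>2) (x k) (x (Suc k))"
    and M_bound1: "\<forall>k. opnorm (matrix_inv (M k) ** F' (x k)) \<le> \<omega>1"
    and M_bound2: "\<forall>k. opnorm (matrix_inv (M k) ** F' (x k) - mat 1) \<le> \<omega>2"
    and P_inv: "\<forall>k. invertible (P k)"
    and residual: "\<forall>k. norm (P k *v r k) \<le> \<eta> k * norm (P k *v F (x k))"
    and forcing: "\<forall>k. 0 \<le> \<eta> k * cond (P k ** F' (x k)) \<and> \<eta> k * cond (P k ** F' (x k)) \<le> vth"
  shows "(\<forall>k. x k \<in> ball xs (min (kappa R \<Omega> xs) (rho R f df \<omega>1 \<omega>2 vth lam)) \<inter> C)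
    \<and> x \<longlonglongrightarrow> xs
    \<and> (\<forall>k. norm (x (Suc k) - xs) < norm (x k - xs))
    \<and> limsup (\<lambda>k. ereal (norm (x (Suc k) - xs) / norm (x k - xs)))
        \<le> ereal (\<omega>1 * ((1 + vth) * sqrt (2 * real_of_ereal (limsup (\<lambda>k. ereal (\<theta> k)))) + vth) + \<omega>2)
    \<and> (\<forall>p::real. 0 < p \<and> p \<le> 1 \<longrightarrow>
        strict_mono_on {0<..<nu R df} (\<lambda>t. (f t / df t - t) / t powr (p + 1)) \<longrightarrow>
        (\<forall>k. norm (x (Suc k) - xs)
          \<le> \<omega>1 * (1 + vth) * (1 + lam)
              * (f (norm (x 0 - xs)) / df (norm (x 0 - xs)) - norm (x 0 - xs))
              * (norm (x k - xs) / norm (x 0 - xs)) powr (p + 1)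
            + (\<omega>1 * ((1 + vth) * lam + vth) + \<omega>2) * norm (x k - xs)))"
proof -
  have \<omega>1_pos: "0 < \<omega>1" using \<omega>_bounds by linarith
  have "lam * (\<omega>1 * (1 + vth)) < 1 - \<omega>2 - \<omega>1 * vth"
    using lam_bounds(2) \<omega>1_pos vth_bounds by (simp add: pos_less_divide_eq)
  hence contraction: "\<omega>1 * ((1 + vth) * lam + vth) + \<omega>2 < 1" by (simp add: algebra_simps)
  interpret inl_condG F F' xs "kappa R \<Omega> xs" R f df C vth \<omega>1 \<omega>2 lam x y s r M P \<theta> \<eta>
    using assms \<omega>1_pos contraction ball_kappa_subset[OF R_pos, of xs \<Omega>] by unfold_locales auto
  show ?thesis
    using iterates_in_ball iterates_tendsto err_Suc_less err_ratio_limsup_le err_Suc_le_powr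
    by blast
qed

end
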